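(* Let $m\geq 3$ be odd, $n=3m$, and let $\mathcal{L}_n$ be the latin square defined below. Every transversal of $\mathcal{L}_n$ contains at least one entry from each of the nine blocks $A_{11},A_{12},A_{13},A_{21},A_{22},A_{23},A_{31},A_{32},A_{33}$.
   Context: A latin square of order $n$ is viewed as its set of entries $(r,c,s)$ (symbol $s$ in row $r$, column $c$); a transversal is a set of $n$ entries containing each row, column and symbol exactly once. Let $m\ge3$ be odd and $n=3m$. The latin square $\mathcal{L}_n$ has rows, columns and symbols in $\{0,1,\dots,n-1\}$ and is partitioned into nine $m\times m$ blocks $A_{ij}$, $i,j\in\{1,2,3\}$: for $a,b\in\{0,\dots,m-1\}$, the cell in row $(i-1)m+a$ and column $(j-1)m+b$ contains $A_{ij}[a,b]$. Writing $t$ for the residue of $a+b$ modulo $m$ in $\{0,\dots,m-1\}$, $A_{ij}[a,b]=t$ if $t\neq 0$ and $i+j\equiv 2\pmod 3$; $A_{ij}[a,b]=t+m$ if $t\neq m-1$ and $i+j\equiv 0\pmod 3$; $A_{ij}[a,b]=t+2m$ if $t\neq m-1$ and $i+j\equiv1\pmod3$; $A_{ij}[a,b]=0$ if $t=0$ and $(i,j)=(1,1)$; $A_{ij}[a,b]=2m-1$ if $t=0$ and $(i,j)=(2,3)$; $A_{ij}[a,b]=3m-1$ if $t=0$ and $(i,j)=(3,2)$; $A_{ij}[a,b]=0$ if $t=m-1$ and $(i,j)\in\{(2,2),(3,3)\}$; $A_{ij}[a,b]=2m-1$ if $t=m-1$ and $(i,j)\in\{(1,2),(3,1)\}$; $A_{ij}[a,b]=3m-1$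 if $t=m-1$ and $(i,j)\in\{(1,3),(2,1)\}$. An entry of $\mathcal{L}_n$ is said to be in block $A_{ij}$ if its cell lies in that block. *)

theory Defs
  imports Main
begin

definition blk_sym :: "nat \<Rightarrow> nat \<Rightarrow> nat \<Rightarrow> nat \<Rightarrow> nat \<Rightarrow> nat" where
  "blk_sym m i j a b =
     (let t = (a + b) mod m in
      if (i + j) mod 3 = 2 then
        (if t \<noteq> 0 then t
         else if (i, j) = (1, 1) then 0
         else if (i, j) = (2, 3) then 2 * m - 1
         else 3 * m - 1)
      else if (i + j) mod 3 = 0 then
        (if t \<noteq> m - 1 then t + m
         else if (i, j) = (3, 3) then 0
         else if (i, j) = (1, 2) then 2 * m - 1
         else 3 * m - 1)
      else
        (if t \<noteq> m - 1 then t + 2 * m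
         else if (i, j) = (2, 2) then 0
         else if (i, j) = (3, 1) then 2 * m - 1
         else 3 * m - 1))"

definition blk_idx :: "nat \<Rightarrow> nat \<Rightarrow> nat" where
  "blk_idx m r = r div m + 1"

definition Lsym :: "nat \<Rightarrow> nat \<Rightarrow> nat \<Rightarrow> nat" where
  "Lsym m r c = blk_sym m (blk_idx m r) (blk_idx m c) (r mod m) (c mod m)"

definition Lsq :: "nat \<Rightarrow> (nat \<times> nat \<times> nat) set" where
  "Lsq m = {(r, c, s). r < 3 * m \<and> c < 3 * m \<and> s = Lsym m r c}"

definition is_transversal :: "nat \<Rightarrow> (nat \<times> nat \<times> nat) set \<Rightarrow> (nat \<times> nat \<times> nat) set \<Rightarrow> bool" where
  "is_transversal n L T \<longleftrightarrow> T \<subseteq> L \<and> finite T \<and> card T = n \<and>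
     (\<forall>r<n. \<exists>!e. e \<in> T \<and> fst e = r) \<and>
     (\<forall>c<n. \<exists>!e. e \<in> T \<and> fst (snd e) = c) \<and>
     (\<forall>s<n. \<exists>!e. e \<in> T \<and> snd (snd e) = s)"

definition in_block :: "nat \<Rightarrow> nat \<Rightarrow> nat \<Rightarrow> nat \<times> nat \<times> nat \<Rightarrow> bool" where
  "in_block m i j e \<longleftrightarrow> blk_idx m (fst e) = i \<and> blk_idx m (fst (snd e)) = j"

end

(*
  Number the blocks (i, j) from 0 and call (i + j) mod 3 the class of a block. A cell (r, c) in a
  block of class k holds (r + c) mod m + k m, except where this is the special symbol of band k
  (0, 2m - 1, 3m - 1 for k = 0, 1, 2); there it holds the special symbol of band d, where the block
  lies on the broken diagonal {(i, i + d)}. So a transversal T has m - 1 + n_k entries in blocks of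
  class k, where n_k counts the entries of T with a special symbol lying in such blocks.

  Summing s - r - c over T gives 0 modulo m, as m is odd. Only cells with a special symbol can
  violate s = r + c modulo m, and the three such entries of T contribute 1 - n_0; hence n_0 = 1.
  The block counts of T form a 3 x 3 matrix with all row and column sums m, so its antidiagonal
  sums m - 1 + n_k are congruent modulo 3, and n_0 = 1 forces all of them to be m. Then the matrix
  is constant along each broken diagonal {(i, i + d)}, and each of these contains the block of an
  entry with a special symbol.
*)
theory Submission
  imports Defs "HOL-Number_Theory.Cong"
begin

lemma div_eq_iff_band: "0 < (m::nat) \<Longrightarrow> s div m = k \<longleftrightarrow> k * m \<le> s \<and> s < k * m + m"
proof
  assume "0 < m" "s div m = k"
  then show "k * m \<le> s \<and> s < k * m + m"
    using div_times_less_eq_dividend[of s m] dividend_less_div_times[of m s] by (simp add: mult.commute)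
qed (simp add: div_nat_eqI mult.commute)

lemma card_div_eq:
  fixes m k q :: nat
  assumes "0 < m" "k < q"
  shows "card {s. s < q * m \<and> s div m = k} = m"
proof -
  have "k * m + m \<le> q * m"
    using assms(2) mult_le_mono1[of "Suc k" q m] by simp
  then have "{s. s < q * m \<and> s div m = k} = {k * m..<k * m + m}"
    using assms(1) by (auto simp: div_eq_iff_band)
  then show ?thesis
    by simp
qed

lemma odd_dvd_sum_lessThan:
  fixes m q :: nat
  assumes "odd m"
  shows "m dvd (\<Sum>s<q * m. s)"
proof -
  have "2 * (\<Sum>s<q * m. s) = m * (q * (q * m - 1))"
    using Sum_Ico_nat[of 0 "q * m"] by (simp add: lessThan_atLeast0 algebra_simps)
  then have "m dvd (\<Sum>s<q * m. s) * 2"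
    by (metis dvd_triv_left mult.commute)
  then show ?thesis
    using assms by (simp add: coprime_dvd_mult_left_iff)
qed

lemma lessThan_3: "{..<3::nat} = {0, 1, 2}"
  by auto

lemma add_shift_mod_3:
  fixes i j :: nat
  assumes "i < 3" "j < 3"
  shows "(i + (j + 3 - i) mod 3) mod 3 = j"
proof -
  have "i \<in> {0, 1, 2}" "j \<in> {0, 1, 2}"
    using assms by auto
  then show ?thesis
    by auto
qed

lemma bij_betw_if_unique:
  assumes "\<forall>a\<in>A. f a \<in> B" "\<forall>b\<in>B. \<exists>!a. a \<in> A \<and> f a = b"
  shows "bij_betw f A B"
  using assms by (intro bij_betwI') auto

lemma card_filter_bij_betw:
  assumes "bij_betw f A B"
  shows "card {a \<in> A. P (f a)} = card {b \<in> B. P b}"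
proof -
  have "bij_betw f {a \<in> A. P (f a)} {b \<in> B. P b}"
    using assms by (rule bij_betw_subset) (use assms in \<open>auto simp: bij_betw_def\<close>)
  then show ?thesis
    by (rule bij_betw_same_card)
qed

lemma card_eq_sum_card_fibres:
  assumes "finite A" "finite B" "f ` A \<subseteq> B"
  shows "card A = (\<Sum>b\<in>B. card {a \<in> A. f a = b})"
  using sum.group[OF assms, of "\<lambda>_. 1 :: nat"] by simp

lemma transversal_bij_betw:
  assumes "is_transversal n L T" "L \<subseteq> {..<n} \<times> {..<n} \<times> {..<n}"
  shows "bij_betw fst T {..<n}" "bij_betw (fst \<circ> snd) T {..<n}" "bij_betw (snd \<circ> snd) T {..<n}"
proof -
  have "T \<subseteq> L"
    using assms(1) by (simp add: is_transversal_def)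
  with assms(2) have "T \<subseteq> {..<n} \<times> {..<n} \<times> {..<n}"
    by (rule order_trans[rotated])
  then have "\<forall>e\<in>T. fst e \<in> {..<n}" "\<forall>e\<in>T. (fst \<circ> snd) e \<in> {..<n}"
    "\<forall>e\<in>T. (snd \<circ> snd) e \<in> {..<n}"
    by auto
  moreover have "\<forall>r\<in>{..<n}. \<exists>!e. e \<in> T \<and> fst e = r"
    "\<forall>c\<in>{..<n}. \<exists>!e. e \<in> T \<and> (fst \<circ> snd) e = c"
    "\<forall>s\<in>{..<n}. \<exists>!e. e \<in> T \<and> (snd \<circ> snd) e = s"
    using assms(1) by (simp_all add: is_transversal_def)
  ultimately show "bij_betw fst T {..<n}" "bij_betw (fst \<circ> snd) T {..<n}" "bij_betw (snd \<circ> snd) T {..<n}"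
    by (simp_all add: bij_betw_if_unique)
qed

section \<open>Three by three matrices with constant line sums\<close>

definition antidiag_sum :: "(nat \<Rightarrow> nat \<Rightarrow> nat) \<Rightarrow> nat \<Rightarrow> nat" where
  "antidiag_sum x k = (\<Sum>i<3. \<Sum>j<3. if (i + j) mod 3 = k then x i j else 0)"

lemma line_sums_explicit:
  fixes x :: "nat \<Rightarrow> nat \<Rightarrow> nat"
  assumes rows: "\<forall>i<3. (\<Sum>j<3. x i j) = m"
    and cols: "\<forall>j<3. (\<Sum>i<3. x i j) = m"
  shows "x 0 0 + x 0 1 + x 0 2 = m" "x 1 0 + x 1 1 + x 1 2 = m" "x 2 0 + x 2 1 + x 2 2 = m"
    "x 0 0 + x 1 0 + x 2 0 = m" "x 0 1 + x 1 1 + x 2 1 = m" "x 0 2 + x 1 2 + x 2 2 = m"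
  using rows[rule_format, of 0] rows[rule_format, of 1] rows[rule_format, of 2]
    cols[rule_format, of 0] cols[rule_format, of 1] cols[rule_format, of 2]
  by (simp_all add: lessThan_3)

lemma antidiag_sum_explicit:
  "antidiag_sum x 0 = x 0 0 + x 1 2 + x 2 1"
  "antidiag_sum x 1 = x 0 1 + x 1 0 + x 2 2"
  "antidiag_sum x 2 = x 0 2 + x 1 1 + x 2 0"
  by (simp_all add: antidiag_sum_def lessThan_3)

lemma antidiag_sums_eq_if_first_eq:
  fixes x :: "nat \<Rightarrow> nat \<Rightarrow> nat"
  assumes rows: "\<forall>i<3. (\<Sum>j<3. x i j) = m"
    and cols: "\<forall>j<3. (\<Sum>i<3. x i j) = m"
    and lower: "\<forall>k<3. m \<le> antidiag_sum x k + 1"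
    and first: "antidiag_sum x 0 = m"
  shows "\<forall>k<3. antidiag_sum x k = m"
proof -
  note lines = line_sums_explicit[OF rows cols]
  (* The antidiagonal sums are congruent modulo 3, add up to 3 m, and are at least m - 1. *)
  define a where "a = x 0 1 + x 1 0 + x 1 1"
  have eq: "antidiag_sum x 0 + 3 * a = antidiag_sum x 1 + 3 * m"
    using lines by (simp add: antidiag_sum_def lessThan_3 a_def)
  have total: "antidiag_sum x 0 + antidiag_sum x 1 + antidiag_sum x 2 = 3 * m"
    using lines by (simp add: antidiag_sum_def lessThan_3)
  have "m \<le> antidiag_sum x 1 + 1" "m \<le> antidiag_sum x 2 + 1"
    using lower by (simp_all add: numeral_2_eq_2)
  with eq total first have "3 * a < 3 * (m + 1)" "3 * m < 3 * (a + 1)"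
    by simp_all
  then have "a = m"
    by simp
  with eq total first have "antidiag_sum x 1 = m" "antidiag_sum x 2 = m"
    by simp_all
  then show ?thesis
    using first by (auto simp: less_Suc_eq numeral_3_eq_3 numeral_2_eq_2)
qed

lemma circulant_if_antidiag_sums_eq:
  fixes x :: "nat \<Rightarrow> nat \<Rightarrow> nat"
  assumes rows: "\<forall>i<3. (\<Sum>j<3. x i j) = m"
    and cols: "\<forall>j<3. (\<Sum>i<3. x i j) = m"
    and diags: "\<forall>k<3. antidiag_sum x k = m"
    and "i < 3" "d < 3"
  shows "x i ((i + d) mod 3) = x 0 d"
proof -
  have "x 1 1 = x 0 0" "x 2 2 = x 0 0" "x 1 2 = x 0 1" "x 2 0 = x 0 1" "x 1 0 = x 0 2" "x 2 1 = x 0 2"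
    using line_sums_explicit[OF rows cols] diags[rule_format, of 0] diags[rule_format, of 1]
      diags[rule_format, of 2]
    unfolding antidiag_sum_explicit by linarith+
  moreover have "i \<in> {0, 1, 2}" "d \<in> {0, 1, 2}"
    using assms(4,5) by auto
  ultimately show ?thesis
    by (auto simp: numeral_2_eq_2)
qed

section \<open>The block structure of the square\<close>

definition block_class :: "nat \<Rightarrow> nat \<Rightarrow> nat \<Rightarrow> nat" where
  "block_class m r c = (r div m + c div m) mod 3"

definition block_shift :: "nat \<Rightarrow> nat \<Rightarrow> nat \<Rightarrow> nat" where
  "block_shift m r c = (c div m + 3 - r div m) mod 3"

definition band_sym :: "nat \<Rightarrow> nat \<Rightarrow> nat \<Rightarrow> nat" where
  "band_sym m r c = (r + c) mod m + block_class m r c * m"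

definition special_sym :: "nat \<Rightarrow> nat \<Rightarrow> nat" where
  "special_sym m d = (if d = 0 then 0 else Suc d * m - 1)"

lemma Lsym_eq:
  fixes m r c :: nat
  assumes "r < 3 * m" "c < 3 * m"
  shows "Lsym m r c = (if band_sym m r c = special_sym m (block_class m r c)
    then special_sym m (block_shift m r c) else band_sym m r c)"
proof -
  have "m > 0"
    using assms by simp
  define i j t where "i = r div m" and "j = c div m" and "t = (r + c) mod m"
  have "i < 3" "j < 3"
    using assms by (simp_all add: i_def j_def less_mult_imp_div_less)
  then have "i = 0 \<or> i = 1 \<or> i = 2" "j = 0 \<or> j = 1 \<or> j = 2"
    by auto
  moreover have "t < m" "(r mod m + c mod m) mod m = t"
    using \<open>m > 0\<close> by (simp_all add: t_def mod_add_eq)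
  ultimately show ?thesis
    using \<open>m > 0\<close>
    unfolding Lsym_def blk_idx_def blk_sym_def band_sym_def block_class_def block_shift_def
      special_sym_def Let_def i_def[symmetric] j_def[symmetric] t_def[symmetric]
    by (elim disjE) auto
qed

lemma block_class_less: "block_class m r c < 3"
  by (simp add: block_class_def)

lemma block_shift_less: "block_shift m r c < 3"
  by (simp add: block_shift_def)

lemma special_sym_div:
  assumes "0 < m" "d < 3"
  shows "special_sym m d div m = d"
proof -
  have "d = 0 \<or> d = 1 \<or> d = 2"
    using assms(2) by auto
  then show ?thesis
    using assms(1) by (elim disjE) (simp_all add: special_sym_def div_eq_iff_band)
qed

lemma special_sym_less: "0 < m \<Longrightarrow> d < 3 \<Longrightarrow> special_sym m d < 3 * m"
  using special_sym_div[of m d] div_less_iff_less_mult[of m "special_sym m d" 3] by simp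

lemma special_sym_inj:
  assumes "0 < m" "d < 3" "d' < 3" "special_sym m d = special_sym m d'"
  shows "d = d'"
  using special_sym_div[OF assms(1,2)] special_sym_div[OF assms(1,3)] assms(4) by metis

lemma band_sym_div: "0 < m \<Longrightarrow> band_sym m r c div m = block_class m r c"
  by (simp add: band_sym_def)

lemma Lsym_less:
  assumes "r < 3 * m" "c < 3 * m"
  shows "Lsym m r c < 3 * m"
proof -
  have "0 < m"
    using assms by simp
  have "Lsym m r c div m < 3"
    using Lsym_eq[OF assms] special_sym_div[OF \<open>0 < m\<close>] band_sym_div[OF \<open>0 < m\<close>]
    by (simp add: block_class_less block_shift_less)
  then show ?thesis
    using \<open>0 < m\<close> by (simp add: div_less_iff_less_mult mult.commute)
qed

lemma Lsym_eq_special_sym_iff: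
  assumes "r < 3 * m" "c < 3 * m" "d < 3"
  shows "Lsym m r c = special_sym m d \<longleftrightarrow>
    band_sym m r c = special_sym m (block_class m r c) \<and> block_shift m r c = d"
proof -
  have "0 < m"
    using assms by simp
  then show ?thesis
    using Lsym_eq[OF assms(1,2)] special_sym_inj[OF \<open>0 < m\<close> block_shift_less assms(3)]
      band_sym_div[OF \<open>0 < m\<close>] special_sym_div[OF \<open>0 < m\<close> assms(3)]
    by (metis block_class_less)
qed

lemma Lsym_eq_band_sym:
  assumes "r < 3 * m" "c < 3 * m" "Lsym m r c \<notin> special_sym m ` {..<3}"
  shows "Lsym m r c = band_sym m r c"
  using assms Lsym_eq[OF assms(1,2)] block_shift_less by fastforce

definition special_residue :: "nat \<Rightarrow> int" where
  "special_residue d = (if d = 0 then 0 else - 1)"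

definition cell_defect :: "nat \<Rightarrow> nat \<Rightarrow> nat \<Rightarrow> int" where
  "cell_defect m r c =
    (if band_sym m r c = special_sym m (block_class m r c)
     then special_residue (block_shift m r c) - special_residue (block_class m r c) else 0)"

lemma sum_special_residue_diff:
  fixes c :: "nat \<Rightarrow> nat"
  shows "(\<Sum>d<3. special_residue d - special_residue (c d)) = 1 - int (card {d. d < 3 \<and> c d = 0})"
proof -
  have "(\<Sum>d<3. special_residue d - special_residue (c d)) = (\<Sum>d<3. of_bool (d = 0) - of_bool (c d = 0))"
    by (rule sum.cong) (auto simp: special_residue_def)
  also have "\<dots> = 1 - int (card {d. d < 3 \<and> c d = 0})"
    by (simp add: sum_subtractf sum_of_bool_eq lessThan_def Collect_conj_eq lessThan_3)
  finally show ?thesis .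
qed

lemma special_sym_cong: "0 < m \<Longrightarrow> [int (special_sym m d) = special_residue d] (mod int m)"
  by (auto simp: special_sym_def special_residue_def cong_iff_dvd_diff of_nat_diff)

lemma band_sym_cong: "[int (band_sym m r c) = int r + int c] (mod int m)"
proof -
  have "[band_sym m r c = r + c] (mod m)"
    by (simp add: band_sym_def cong_def)
  then show ?thesis
    by (simp add: cong_int_iff[symmetric])
qed

lemma Lsym_cong:
  assumes "r < 3 * m" "c < 3 * m"
  shows "[int (Lsym m r c) = int r + int c + cell_defect m r c] (mod int m)"
proof (cases "band_sym m r c = special_sym m (block_class m r c)")
  case True
  have "0 < m"
    using assms by simp
  have "[special_residue (block_class m r c) = int r + int c] (mod int m)"
    using special_sym_cong[OF \<open>0 < m\<close>, of "block_class m r c"] band_sym_cong[of m r c] True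
    by (metis cong_sym cong_trans)
  then have "[special_residue (block_class m r c) + cell_defect m r c = int r + int c + cell_defect m r c] (mod int m)"
    using cong_refl by (rule cong_add)
  then have "[special_residue (block_shift m r c) = int r + int c + cell_defect m r c] (mod int m)"
    by (simp add: cell_defect_def True)
  with special_sym_cong[OF \<open>0 < m\<close>] show ?thesis
    using Lsym_eq[OF assms] True by (metis cong_trans)
next
  case False
  then show ?thesis
    using Lsym_eq[OF assms] band_sym_cong by (simp add: cell_defect_def)
qed

lemma Lsq_subset: "Lsq m \<subseteq> {..<3 * m} \<times> {..<3 * m} \<times> {..<3 * m}"
  by (auto simp: Lsq_def Lsym_less)

section \<open>Transversals of the square\<close>

locale Lsq_transversal =
  fixes m :: nat and T :: "(nat \<times> nat \<times> nat) set"
  assumes odd_m: "odd m" and m_ge_3: "3 \<le> m"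
    and transversal: "is_transversal (3 * m) (Lsq m) T"
begin

lemma m_pos: "0 < m"
  using m_ge_3 by simp

lemma finite_T: "finite T"
  using transversal by (simp add: is_transversal_def)

lemma entry_in_T:
  assumes "e \<in> T"
  shows "fst e < 3 * m" "fst (snd e) < 3 * m" "snd (snd e) = Lsym m (fst e) (fst (snd e))"
  using assms transversal by (auto simp: is_transversal_def Lsq_def)

lemma bij_rows: "bij_betw fst T {..<3 * m}"
  and bij_cols: "bij_betw (fst \<circ> snd) T {..<3 * m}"
  and bij_syms: "bij_betw (snd \<circ> snd) T {..<3 * m}"
  using transversal_bij_betw[OF transversal Lsq_subset] by simp_all

definition block_count :: "nat \<Rightarrow> nat \<Rightarrow> nat" where
  "block_count i j = card {e \<in> T. fst e div m = i \<and> fst (snd e) div m = j}"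

definition entry_class :: "nat \<times> nat \<times> nat \<Rightarrow> nat" where
  "entry_class e = block_class m (fst e) (fst (snd e))"

definition special_entry :: "nat \<Rightarrow> nat \<times> nat \<times> nat" where
  "special_entry d = (THE e. e \<in> T \<and> snd (snd e) = special_sym m d)"

lemma special_entry:
  assumes "d < 3"
  shows "special_entry d \<in> T" "snd (snd (special_entry d)) = special_sym m d"
proof -
  have "\<exists>!e. e \<in> T \<and> snd (snd e) = special_sym m d"
    using transversal special_sym_less[OF m_pos assms] by (simp add: is_transversal_def)
  from theI'[OF this] show "special_entry d \<in> T" "snd (snd (special_entry d)) = special_sym m d"
    unfolding special_entry_def by simp_all
qed

lemma special_entry_unique:
  assumes "e \<in> T" "d < 3" "snd (snd e) = special_sym m d"
  shows "e = special_entry d"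
  using bij_syms special_entry[OF assms(2)] assms
  by (metis bij_betw_imp_inj_on comp_apply inj_on_contraD)

lemma entry_block_less:
  assumes "e \<in> T"
  shows "fst e div m < 3" "fst (snd e) div m < 3"
  using entry_in_T[OF assms] by (simp_all add: less_mult_imp_div_less)

lemma row_sums: "\<forall>i<3. (\<Sum>j<3. block_count i j) = m"
proof (intro allI impI)
  fix i :: nat
  assume "i < 3"
  have "card {e \<in> T. fst e div m = i} = (\<Sum>j<3. card {e \<in> {e \<in> T. fst e div m = i}. fst (snd e) div m = j})"
    by (rule card_eq_sum_card_fibres) (auto simp: finite_T dest: entry_block_less)
  moreover have "card {e \<in> T. fst e div m = i} = m"
    using card_filter_bij_betw[OF bij_rows, of "\<lambda>r. r div m = i"] card_div_eq[OF m_pos \<open>i < 3\<close>]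
    by simp
  ultimately show "(\<Sum>j<3. block_count i j) = m"
    by (simp add: block_count_def conj_assoc)
qed

lemma col_sums: "\<forall>j<3. (\<Sum>i<3. block_count i j) = m"
proof (intro allI impI)
  fix j :: nat
  assume "j < 3"
  have "card {e \<in> T. fst (snd e) div m = j} = (\<Sum>i<3. card {e \<in> {e \<in> T. fst (snd e) div m = j}. fst e div m = i})"
    by (rule card_eq_sum_card_fibres) (auto simp: finite_T dest: entry_block_less)
  moreover have "card {e \<in> T. fst (snd e) div m = j} = m"
    using card_filter_bij_betw[OF bij_cols, of "\<lambda>c. c div m = j"] card_div_eq[OF m_pos \<open>j < 3\<close>]
    by simp
  ultimately show "(\<Sum>i<3. block_count i j) = m"
    by (simp add: block_count_def conj_commute conj_left_commute)
qed

lemma antidiag_sum_block_count: "antidiag_sum block_count k = card {e \<in> T. entry_class e = k}"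
proof -
  have "card {e \<in> T. entry_class e = k} = (\<Sum>p \<in> {..<3} \<times> {..<3}.
      card {e \<in> {e \<in> T. entry_class e = k}. (fst e div m, fst (snd e) div m) = p})"
    by (rule card_eq_sum_card_fibres) (auto simp: finite_T dest: entry_block_less)
  also have "\<dots> = (\<Sum>(i, j) \<in> {..<3} \<times> {..<3}. if (i + j) mod 3 = k then block_count i j else 0)"
    by (intro sum.cong refl) (auto simp: block_count_def entry_class_def block_class_def card_eq_0_iff
        intro!: arg_cong[where f = card])
  finally show ?thesis
    by (simp add: antidiag_sum_def sum.cartesian_product)
qed

lemma block_count_pos_if_entry:
  assumes "e \<in> T"
  shows "0 < block_count (fst e div m) (fst (snd e) div m)"
proof -
  have "{e' \<in> T. fst e' div m = fst e div m \<and> fst (snd e') div m = fst (snd e) div m} \<noteq> {}"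
    using assms by blast
  then show ?thesis
    unfolding block_count_def using finite_T by (simp add: card_gt_0_iff)
qed

lemma inj_special_entry: "inj_on special_entry {..<3}"
  by (rule inj_onI) (metis lessThan_iff special_entry(2) special_sym_inj[OF m_pos])

lemma entry_sym_div:
  assumes "e \<in> T" "snd (snd e) \<notin> special_sym m ` {..<3}"
  shows "snd (snd e) div m = entry_class e"
  using Lsym_eq_band_sym[OF entry_in_T(1,2)[OF assms(1)]] entry_in_T(3)[OF assms(1)] assms(2)
    band_sym_div[OF m_pos] by (simp add: entry_class_def)

lemma card_ordinary_entries_of_class:
  assumes "k < 3"
  shows "card {e \<in> T. entry_class e = k \<and> snd (snd e) \<notin> special_sym m ` {..<3}} = m - 1"
proof -
  have special_in_band: "s \<in> special_sym m ` {..<3} \<longleftrightarrow> s = special_sym m k" if "s div m = k" for s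
    using special_sym_div[OF m_pos] that assms by force
  have "entry_class e = k \<and> snd (snd e) \<notin> special_sym m ` {..<3} \<longleftrightarrow>
      snd (snd e) div m = k \<and> snd (snd e) \<noteq> special_sym m k" if "e \<in> T" for e
  proof
    assume "entry_class e = k \<and> snd (snd e) \<notin> special_sym m ` {..<3}"
    then show "snd (snd e) div m = k \<and> snd (snd e) \<noteq> special_sym m k"
      using entry_sym_div[OF that] assms by auto
  next
    assume *: "snd (snd e) div m = k \<and> snd (snd e) \<noteq> special_sym m k"
    then have "snd (snd e) \<notin> special_sym m ` {..<3}"
      using special_in_band by blast
    then show "entry_class e = k \<and> snd (snd e) \<notin> special_sym m ` {..<3}"
      using entry_sym_div[OF that] * by simp
  qed
  then have "{e \<in> T. entry_class e = k \<and> snd (snd e) \<notin> special_sym m ` {..<3}}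
      = {e \<in> T. (\<lambda>s. s div m = k \<and> s \<noteq> special_sym m k) ((snd \<circ> snd) e)}"
    by auto
  then have "card {e \<in> T. entry_class e = k \<and> snd (snd e) \<notin> special_sym m ` {..<3}}
      = card {s \<in> {..<3 * m}. s div m = k \<and> s \<noteq> special_sym m k}"
    using card_filter_bij_betw[OF bij_syms] by simp
  also have "{s \<in> {..<3 * m}. s div m = k \<and> s \<noteq> special_sym m k}
      = {s. s < 3 * m \<and> s div m = k} - {special_sym m k}"
    by auto
  also have "card \<dots> = m - 1"
    using card_div_eq[OF m_pos assms] special_sym_div[OF m_pos assms] special_sym_less[OF m_pos assms]
    by simp
  finally show ?thesis .
qed

lemma special_entries_of_class:
  "{e \<in> T. entry_class e = k \<and> snd (snd e) \<in> special_sym m ` {..<3}}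
    = special_entry ` {d. d < 3 \<and> entry_class (special_entry d) = k}"
  using special_entry special_entry_unique by fastforce

lemma card_entries_of_class:
  assumes "k < 3"
  shows "card {e \<in> T. entry_class e = k} = m - 1 + card {d. d < 3 \<and> entry_class (special_entry d) = k}"
proof -
  let ?ordinary = "{e \<in> T. entry_class e = k \<and> snd (snd e) \<notin> special_sym m ` {..<3}}"
  let ?special = "{e \<in> T. entry_class e = k \<and> snd (snd e) \<in> special_sym m ` {..<3}}"
  have "{e \<in> T. entry_class e = k} = ?ordinary \<union> ?special"
    by blast
  then have "card {e \<in> T. entry_class e = k} = card ?ordinary + card ?special"
    using finite_T by (simp add: card_Un_disjoint disjoint_iff)
  then have "card {e \<in> T. entry_class e = k} =
      (m - 1) + card (special_entry ` {d. d < 3 \<and> entry_class (special_entry d) = k})"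
    using card_ordinary_entries_of_class[OF assms] special_entries_of_class[of k] by simp
  moreover have "inj_on special_entry {d. d < 3 \<and> entry_class (special_entry d) = k}"
    using inj_special_entry by (rule inj_on_subset) auto
  ultimately show ?thesis
    by (simp add: card_image)
qed

lemma dvd_sum_cell_defect: "int m dvd (\<Sum>e\<in>T. cell_defect m (fst e) (fst (snd e)))"
proof -
  define Q where "Q = (\<Sum>s<3 * m. int s)"
  define D where "D = (\<Sum>e\<in>T. cell_defect m (fst e) (fst (snd e)))"
  have "(\<Sum>e\<in>T. int (fst e)) = Q" "(\<Sum>e\<in>T. int (fst (snd e))) = Q" "(\<Sum>e\<in>T. int (snd (snd e))) = Q"
    using sum.reindex_bij_betw[OF bij_rows, of int] sum.reindex_bij_betw[OF bij_cols, of int]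
      sum.reindex_bij_betw[OF bij_syms, of int] by (simp_all add: Q_def)
  moreover have "[(\<Sum>e\<in>T. int (snd (snd e))) =
      (\<Sum>e\<in>T. int (fst e) + int (fst (snd e)) + cell_defect m (fst e) (fst (snd e)))] (mod int m)"
    by (rule cong_sum) (simp add: entry_in_T Lsym_cong)
  ultimately have "[Q = Q + Q + D] (mod int m)"
    by (simp add: sum.distrib D_def)
  then have "int m dvd - (Q + D)"
    by (simp add: cong_iff_dvd_diff)
  then have "int m dvd Q + D"
    by (simp only: dvd_minus_iff)
  moreover have "int m dvd Q"
    using odd_dvd_sum_lessThan[OF odd_m, of 3] unfolding Q_def by (simp flip: of_nat_sum)
  ultimately show ?thesis
    unfolding D_def by (simp add: dvd_add_right_iff)
qed

lemma cell_defect_special_entry: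
  assumes "d < 3"
  shows "cell_defect m (fst (special_entry d)) (fst (snd (special_entry d)))
    = special_residue d - special_residue (entry_class (special_entry d))"
  using Lsym_eq_special_sym_iff[OF entry_in_T(1,2)[OF special_entry(1)[OF assms]] assms]
    entry_in_T(3)[OF special_entry(1)[OF assms]] special_entry(2)[OF assms]
  by (simp add: cell_defect_def entry_class_def)

lemma cell_defect_ordinary:
  assumes "e \<in> T" "e \<notin> special_entry ` {..<3}"
  shows "cell_defect m (fst e) (fst (snd e)) = 0"
proof -
  have "snd (snd e) \<notin> special_sym m ` {..<3}"
    using assms special_entry_unique by blast
  then show ?thesis
    using Lsym_eq[OF entry_in_T(1,2)[OF assms(1)]] entry_in_T(3)[OF assms(1)]
    by (auto simp: cell_defect_def block_shift_less)
qed

lemma card_special_entries_class_0: "card {d. d < 3 \<and> entry_class (special_entry d) = 0} = 1"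
proof -
  let ?n = "card {d. d < 3 \<and> entry_class (special_entry d) = 0}"
  have "(\<Sum>e\<in>T. cell_defect m (fst e) (fst (snd e)))
      = (\<Sum>e \<in> special_entry ` {..<3}. cell_defect m (fst e) (fst (snd e)))"
    using finite_T special_entry(1) cell_defect_ordinary by (intro sum.mono_neutral_right) auto
  also have "\<dots> = (\<Sum>d<3. special_residue d - special_residue (entry_class (special_entry d)))"
    by (simp add: sum.reindex[OF inj_special_entry] cell_defect_special_entry)
  also have "\<dots> = 1 - int ?n"
    by (rule sum_special_residue_diff)
  finally have "int m dvd 1 - int ?n"
    using dvd_sum_cell_defect by simp
  moreover have "?n \<le> 3"
    using card_mono[of "{..<3}" "{d. d < 3 \<and> entry_class (special_entry d) = 0}"] by auto
  ultimately show ?thesis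
    using m_ge_3 dvd_imp_le_int[of "1 - int ?n" "int m"] by linarith
qed

lemma antidiag_sums_block_count: "\<forall>k<3. antidiag_sum block_count k = m"
proof (rule antidiag_sums_eq_if_first_eq[OF row_sums col_sums])
  show "\<forall>k<3. m \<le> antidiag_sum block_count k + 1"
    using m_pos by (simp add: antidiag_sum_block_count card_entries_of_class)
  show "antidiag_sum block_count 0 = m"
    using m_pos by (simp add: antidiag_sum_block_count card_entries_of_class card_special_entries_class_0)
qed

lemma special_entry_block:
  assumes "d < 3"
  shows "fst (snd (special_entry d)) div m = (fst (special_entry d) div m + d) mod 3"
proof -
  let ?e = "special_entry d"
  have "block_shift m (fst ?e) (fst (snd ?e)) = d"
    using Lsym_eq_special_sym_iff[OF entry_in_T(1,2)[OF special_entry(1)[OF assms]] assms]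
      entry_in_T(3)[OF special_entry(1)[OF assms]] special_entry(2)[OF assms] by simp
  moreover have "fst ?e div m < 3" "fst (snd ?e) div m < 3"
    using entry_block_less[OF special_entry(1)[OF assms]] by simp_all
  ultimately show ?thesis
    unfolding block_shift_def using add_shift_mod_3 by metis
qed

lemma block_count_pos:
  assumes "i < 3" "j < 3"
  shows "0 < block_count i j"
proof -
  define d where "d = (j + 3 - i) mod 3"
  have "d < 3" "j = (i + d) mod 3"
    using add_shift_mod_3[OF assms] by (simp_all add: d_def)
  let ?i = "fst (special_entry d) div m"
  have "0 < block_count ?i ((?i + d) mod 3)"
    using block_count_pos_if_entry[OF special_entry(1)] special_entry_block \<open>d < 3\<close> by metis
  moreover have "?i < 3"
    using entry_block_less(1)[OF special_entry(1)[OF \<open>d < 3\<close>]] .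
  ultimately show ?thesis
    using circulant_if_antidiag_sums_eq[OF row_sums col_sums antidiag_sums_block_count]
      \<open>j = (i + d) mod 3\<close> \<open>d < 3\<close> assms(1) by metis
qed

end

theorem theorem15:
  fixes m :: nat and T :: "(nat \<times> nat \<times> nat) set"
  assumes "odd m" and "m \<ge> 3"
    and "is_transversal (3 * m) (Lsq m) T"
  shows "\<forall>i\<in>{1,2,3}. \<forall>j\<in>{1,2,3}. \<exists>e\<in>T. in_block m i j e"
proof (intro ballI)
  interpret Lsq_transversal m T
    using assms by unfold_locales
  fix i j :: nat
  assume "i \<in> {1, 2, 3}" "j \<in> {1, 2, 3}"
  then have "0 < block_count (i - 1) (j - 1)"
    by (intro block_count_pos) auto
  then have "{e \<in> T. fst e div m = i - 1 \<and> fst (snd e) div m = j - 1} \<noteq> {}"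
    unfolding block_count_def by (metis card.empty less_irrefl)
  then obtain e where "e \<in> T" "fst e div m = i - 1" "fst (snd e) div m = j - 1"
    by blast
  then show "\<exists>e\<in>T. in_block m i j e"
    using \<open>i \<in> {1, 2, 3}\<close> \<open>j \<in> {1, 2, 3}\<close> by (auto simp: in_block_def blk_idx_def)
qed

end
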